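(* Let $H$ be a group, $U\subseteq H$ a subgroup, $E$ a field with an $H$-action, and $g_1,\dots,g_N$ elements of order $2$ in $N_H(U)/U$ which generate an infinite subgroup of $N_H(U)/U$. For each $j$ let $\langle U,g_j\rangle$ be the subgroup generated by $U$ and a lift of $g_j$. Then the natural map of $E$-semilinear representations $$r:E[H/U]\to\bigoplus_{j=1}^NE[H/\langle U,g_j\rangle],\qquad [hU]\mapsto\big([h\langle U,g_j\rangle]\big)_{j},$$ is injective.
   Context: $N_H(U)$ is the normalizer of $U$ in $H$. $E[S]$ for an $H$-set $S$ is the $E$-vector space with basis $S$ and $H$-action $h(e[s])=h(e)[hs]$. *)

theory Defs
  imports "HOL-Algebra.Algebra"
begin

definition field_action :: "('g, 'b) monoid_scheme \<Rightarrow> ('g \<Rightarrow> 'e::field \<Rightarrow> 'e) \<Rightarrow> bool" where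
  "field_action G act \<longleftrightarrow>
     (\<forall>h\<in>carrier G. bij (act h) \<and> act h 1 = 1 \<and>
        (\<forall>x y. act h (x + y) = act h x + act h y) \<and>
        (\<forall>x y. act h (x * y) = act h x * act h y)) \<and>
     act \<one>\<^bsub>G\<^esub> = id \<and>
     (\<forall>h\<in>carrier G. \<forall>k\<in>carrier G. act (h \<otimes>\<^bsub>G\<^esub> k) = act h \<circ> act k)"

text \<open>E[S]: the E-vector space with basis S, as finitely supported functions S \<rightarrow> E.\<close>
definition free_vs :: "'s set \<Rightarrow> ('s \<Rightarrow> 'e::field) set" where
  "free_vs S = {f. finite {s. f s \<noteq> 0} \<and> {s. f s \<noteq> 0} \<subseteq> S}"

text \<open>The E-linear map E[S] \<rightarrow> E[T] induced by a map of sets \<phi> : S \<rightarrow> T,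
  i.e. e[s] \<mapsto> e[\<phi> s].\<close>
definition lin_push :: "('s \<Rightarrow> 't) \<Rightarrow> ('s \<Rightarrow> 'e::field) \<Rightarrow> ('t \<Rightarrow> 'e)" where
  "lin_push \<phi> f = (\<lambda>t. \<Sum>s\<in>{s. f s \<noteq> 0 \<and> \<phi> s = t}. f s)"

text \<open>The natural map r : E[H/U] \<rightarrow> \<Oplus>_j E[H/K_j], hU \<mapsto> (hK_j)_j,
  for subgroups K_j \<supseteq> U; note hU K_j = hK_j.\<close>
definition coset_map :: "('g, 'b) monoid_scheme \<Rightarrow> (nat \<Rightarrow> 'g set) \<Rightarrow> ('g set \<Rightarrow> 'e::field) \<Rightarrow> nat \<Rightarrow> ('g set \<Rightarrow> 'e)" where
  "coset_map G K f = (\<lambda>j. lin_push (\<lambda>C. C <#>\<^bsub>G\<^esub> K j) f)"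

end

theory Submission
  imports Defs
begin

text \<open>
  Let \<open>l\<^sub>j\<close> be the chosen lift of \<open>g\<^sub>j\<close>. Since \<open>g\<^sub>j\<close> has order two in \<open>N_H(U)/U\<close>,
  \<open>K\<^sub>j = \<langle>U, l\<^sub>j\<rangle> = U \<union> l\<^sub>jU\<close> (the preimage of \<open>{1, g\<^sub>j}\<close>), so the coset \<open>hK\<^sub>j\<close> contains
  exactly the two distinct \<open>U\<close>-cosets \<open>hU\<close> and \<open>hl\<^sub>jU\<close>, and the \<open>j\<close>-th component of \<open>r(f)\<close>
  at \<open>hK\<^sub>j\<close> is \<open>f(hU) + f(hl\<^sub>jU)\<close>. Hence if \<open>r(f\<^sub>1) = r(f\<^sub>2)\<close>, the difference
  \<open>d = f\<^sub>1 - f\<^sub>2\<close> satisfies \<open>d(hl\<^sub>jU) = -d(hU)\<close>, so the zero set of \<open>d\<close> is invariant under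
  right multiplication by each \<open>l\<^sub>j\<close>. The right periods of a function form a subgroup, so the
  zero set is invariant under the whole subgroup \<open>\<Gamma> \<subseteq> N_H(U)/U\<close> generated by the \<open>g\<^sub>j\<close>.
  If \<open>d(hU) \<noteq> 0\<close>, the infinitely many distinct cosets \<open>hc\<close> (\<open>c \<in> \<Gamma>\<close>) would all lie in the
  finite support of \<open>d\<close>; hence \<open>d = 0\<close>.
\<close>

context group begin

lemma normalizer_carrier: "n \<in> normalizer G U \<Longrightarrow> n \<in> carrier G"
  unfolding normalizer_def stabilizer_def by auto

lemma normalizer_lcos_eq_rcos:
  assumes U: "subgroup U G" and n: "n \<in> normalizer G U"
  shows "n <# U = U #> n"
proof -
  have UG: "U \<subseteq> carrier G" and nG: "n \<in> carrier G"
    using subgroup.subset[OF U] normalizer_carrier[OF n] by auto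
  have conj: "n <# U #> inv n = U"
    using n UG unfolding normalizer_def stabilizer_def by auto
  have "U #> n = (n <# U #> inv n) #> n" by (simp add: conj)
  also have "\<dots> = n <# U" using l_coset_subset_G[OF UG nG] nG by (simp add: coset_mult_assoc)
  finally show ?thesis by simp
qed

lemma lcos_rcos_normalizer:
  assumes "subgroup U G" "x \<in> carrier G" "n \<in> normalizer G U"
  shows "x <# (U #> n) = (x \<otimes> n) <# U"
  using assms normalizer_lcos_eq_rcos[OF assms(1,3)]
    lcos_m_assoc[OF subgroup.subset[OF assms(1)] assms(2) normalizer_carrier[OF assms(3)]] by simp

lemma lcos_eq_iff_mem:
  assumes "subgroup K G" "y \<in> carrier G" "h \<in> carrier G"
  shows "y <# K = h <# K \<longleftrightarrow> y \<in> h <# K"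
  using lcos_self[OF assms(2,1)] l_repr_independence[OF _ assms(3,1), of y] by auto

lemma inj_on_lcos:
  assumes "x \<in> carrier G"
  shows "inj_on (\<lambda>M. x <# M) (Pow (carrier G))"
proof (rule inj_onI)
  fix M M' assume "M \<in> Pow (carrier G)" "M' \<in> Pow (carrier G)" "x <# M = x <# M'"
  then have "inv x <# (x <# M) = inv x <# (x <# M')" by simp
  then show "M = M'" using assms \<open>M \<in> _\<close> \<open>M' \<in> _\<close> by (simp add: lcos_m_assoc lcos_mult_one)
qed

lemma lcos_set_mult_subgroup:
  assumes U: "subgroup U G" and K: "subgroup K G" and UK: "U \<subseteq> K" and y: "y \<in> carrier G"
  shows "(y <# U) <#> K = y <# K"
proof -
  have KG: "K \<subseteq> carrier G" using subgroup.subset[OF K] .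
  have "U <#> K \<subseteq> K <#> K" using UK by (rule mono_set_mult) simp
  moreover have "{\<one>} <#> K \<subseteq> U <#> K"
    using subgroup.one_closed[OF U] by (intro mono_set_mult) auto
  ultimately have "U <#> K = K"
    using subgroup_mult_id[OF K] KG unfolding set_mult_def by force
  then show ?thesis
    using setmult_lcos_assoc[OF _ KG y] UK KG by auto
qed

lemma right_period_subgroup:
  "subgroup {n \<in> carrier G. \<forall>x\<in>carrier G. F (x \<otimes> n) = F x} G"
proof (rule subgroupI)
  fix a assume "a \<in> {n \<in> carrier G. \<forall>x\<in>carrier G. F (x \<otimes> n) = F x}"
  then have a: "a \<in> carrier G" "\<And>x. x \<in> carrier G \<Longrightarrow> F (x \<otimes> a) = F x" by auto
  have "F (x \<otimes> inv a) = F x" if "x \<in> carrier G" for x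
    using a(2)[of "x \<otimes> inv a"] that a(1) by (simp add: m_assoc)
  then show "inv a \<in> {n \<in> carrier G. \<forall>x\<in>carrier G. F (x \<otimes> n) = F x}" using a(1) by simp
next
  fix a b assume "a \<in> {n \<in> carrier G. \<forall>x\<in>carrier G. F (x \<otimes> n) = F x}"
    and "b \<in> {n \<in> carrier G. \<forall>x\<in>carrier G. F (x \<otimes> n) = F x}"
  then show "a \<otimes> b \<in> {n \<in> carrier G. \<forall>x\<in>carrier G. F (x \<otimes> n) = F x}"
    by (simp add: m_assoc[symmetric])
qed auto

lemma involution_subgroup:
  assumes "x \<in> carrier G" "x \<otimes> x = \<one>"
  shows "subgroup {\<one>, x} G"
proof -
  have "inv x = x" using assms inv_equality by blast
  then show ?thesis using assms by (intro subgroupI) auto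
qed

end

lemma (in group_hom) subgroup_vimage:
  assumes "subgroup J H"
  shows "subgroup {x \<in> carrier G. h x \<in> J} G"
  using assms by (intro G.subgroupI)
    (auto simp: subgroup.m_closed subgroup.m_inv_closed subgroup.one_closed intro!: exI[of _ "\<one>\<^bsub>G\<^esub>"])

definition normalizer_quotient :: "('a, 'b) monoid_scheme \<Rightarrow> 'a set \<Rightarrow> 'a set monoid" where
  "normalizer_quotient G U = (G\<lparr>carrier := normalizer G U\<rparr>) Mod U"

context group begin

lemma normalizer_subgroup: "subgroup U G \<Longrightarrow> subgroup (normalizer G U) G"
  using normalizer_imp_subgroup subgroup.subset by blast

lemma rcos_normalizer_subset:
  assumes "subgroup U G" "n \<in> normalizer G U"
  shows "U #> n \<subseteq> normalizer G U"
  using assms subgroup_in_normalizer[OF assms(1)] normal_imp_subgroup subgroup.subset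
    subgroup.m_closed[OF normalizer_subgroup[OF assms(1)]] unfolding r_coset_def by fastforce

lemma normalizer_projection_hom:
  assumes "subgroup U G"
  shows "group_hom (G\<lparr>carrier := normalizer G U\<rparr>) (normalizer_quotient G U) (\<lambda>n. U #> n)"
proof -
  interpret N: normal U "G\<lparr>carrier := normalizer G U\<rparr>"
    using subgroup_in_normalizer[OF assms] .
  show ?thesis
    using N.r_coset_hom_Mod N.factorgroup_is_group N.is_group
    unfolding normalizer_quotient_def by (simp add: group_hom_def group_hom_axioms_def)
qed

lemma carrier_normalizer_quotient:
  "carrier (normalizer_quotient G U) = (\<lambda>n. U #> n) ` normalizer G U"
  unfolding normalizer_quotient_def carrier_FactGroup by simp

lemma one_normalizer_quotient: "\<one>\<^bsub>normalizer_quotient G U\<^esub> = U"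
  unfolding normalizer_quotient_def by simp

lemma lift_of_involution:
  assumes U: "subgroup U G"
    and c: "c \<in> carrier (normalizer_quotient G U)"
    and ord: "group.ord (normalizer_quotient G U) c = 2"
    and l: "l \<in> c"
  shows "l \<in> normalizer G U" "c = U #> l" "l \<otimes> l \<in> U" "l \<notin> U"
proof -
  interpret \<pi>: group_hom "G\<lparr>carrier := normalizer G U\<rparr>" "normalizer_quotient G U" "\<lambda>n. U #> n"
    using normalizer_projection_hom[OF U] .
  obtain n where n: "n \<in> normalizer G U" "c = U #> n"
    using c carrier_normalizer_quotient by auto
  have nG: "n \<in> carrier G" using n normalizer_carrier by auto
  have "U #> n \<subseteq> normalizer G U" using rcos_normalizer_subset[OF U n(1)] .
  then show ln: "l \<in> normalizer G U" using l n by auto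
  show cl: "c = U #> l" using repr_independence[OF _ nG U] l n by auto
  have lG: "l \<in> carrier G" using ln normalizer_carrier by auto
  have "c \<otimes>\<^bsub>normalizer_quotient G U\<^esub> c = c [^]\<^bsub>normalizer_quotient G U\<^esub> (2::nat)"
    using \<pi>.H.nat_pow_Suc c by (simp add: numeral_2_eq_2)
  also have "\<dots> = U" using \<pi>.H.pow_ord_eq_1[OF c] ord one_normalizer_quotient by simp
  finally have "U #> (l \<otimes> l) = U" using \<pi>.hom_mult[of l l] ln cl by simp
  then show "l \<otimes> l \<in> U" using coset_join1 lG U by blast
  have "c \<noteq> U" using \<pi>.H.ord_eq_1[OF c] ord one_normalizer_quotient by auto
  then show "l \<notin> U" using coset_join2[OF lG U] cl by blast
qed

lemma normalizer_preimage_pair: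
  assumes U: "subgroup U G" and l: "l \<in> normalizer G U"
  shows "{n \<in> normalizer G U. U #> n \<in> {U, U #> l}} = U \<union> (l <# U)"
proof (intro equalityI subsetI)
  have lG: "l \<in> carrier G" using normalizer_carrier[OF l] .
  have lU: "l <# U = U #> l" using normalizer_lcos_eq_rcos[OF U l] .
  {
    fix n assume "n \<in> {n \<in> normalizer G U. U #> n \<in> {U, U #> l}}"
    then have n: "n \<in> carrier G" "U #> n = U \<or> U #> n = U #> l"
      using normalizer_carrier by auto
    then show "n \<in> U \<union> (l <# U)" using coset_join1[OF _ n(1) U] rcos_self[OF n(1) U] lU by auto
  next
    fix n assume "n \<in> U \<union> (l <# U)"
    then consider "n \<in> U" | "n \<in> U #> l" using lU by auto
    then show "n \<in> {n \<in> normalizer G U. U #> n \<in> {U, U #> l}}"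
    proof cases
      case 1
      have "U \<subseteq> normalizer G U"
        using subgroup_in_normalizer[OF U] normal_imp_subgroup subgroup.subset by fastforce
      then show ?thesis using 1 coset_join2[OF _ U] subgroup.mem_carrier[OF U] by auto
    next
      case 2
      then show ?thesis
        using rcos_normalizer_subset[OF U l] repr_independence[OF _ lG U] by auto
    qed
  }
qed

text \<open>The subgroup generated by \<open>U\<close> and a representative \<open>l\<close> of an involution of
  \<open>N_G(U)/U\<close> is \<open>U \<union> lU\<close>: it is the preimage of the subgroup \<open>{U, Ul}\<close> of the quotient.\<close>
lemma generate_lift_involution:
  assumes U: "subgroup U G" and l: "l \<in> normalizer G U" and ll: "l \<otimes> l \<in> U"
  shows "generate G (insert l U) = U \<union> (l <# U)"
proof -
  interpret \<pi>: group_hom "G\<lparr>carrier := normalizer G U\<rparr>" "normalizer_quotient G U" "\<lambda>n. U #> n"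
    using normalizer_projection_hom[OF U] .
  have lG: "l \<in> carrier G" using normalizer_carrier[OF l] .
  have "(U #> l) \<otimes>\<^bsub>normalizer_quotient G U\<^esub> (U #> l) = U #> (l \<otimes> l)"
    using \<pi>.hom_mult[of l l] l by simp
  also have "\<dots> = \<one>\<^bsub>normalizer_quotient G U\<^esub>"
    using coset_join2[OF _ U ll] lG one_normalizer_quotient by simp
  finally have "subgroup {\<one>\<^bsub>normalizer_quotient G U\<^esub>, U #> l} (normalizer_quotient G U)"
    using \<pi>.H.involution_subgroup \<pi>.hom_closed[of l] l by simp
  then have "subgroup {n \<in> normalizer G U. U #> n \<in> {U, U #> l}} (G\<lparr>carrier := normalizer G U\<rparr>)"
    using \<pi>.subgroup_vimage one_normalizer_quotient by fastforce
  then have V: "subgroup (U \<union> (l <# U)) G"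
    using incl_subgroup[OF normalizer_subgroup[OF U]] normalizer_preimage_pair[OF U l] by simp
  have "insert l U \<subseteq> U \<union> (l <# U)" using lcos_self[OF lG U] by auto
  then have "generate G (insert l U) \<subseteq> U \<union> (l <# U)" using generate_subgroup_incl V by blast
  moreover have "U \<union> (l <# U) \<subseteq> generate G (insert l U)"
    unfolding l_coset_def by (auto intro: generate.incl generate.eng)
  ultimately show ?thesis by blast
qed

lemma lcos_generate_lift_involution:
  assumes U: "subgroup U G" and l: "l \<in> normalizer G U" and ll: "l \<otimes> l \<in> U"
    and h: "h \<in> carrier G"
  shows "h <# generate G (insert l U) = (h <# U) \<union> ((h \<otimes> l) <# U)"
proof -
  have "h <# (U \<union> (l <# U)) = (h <# U) \<union> (h <# (l <# U))" unfolding l_coset_def by blast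
  then show ?thesis
    using generate_lift_involution[OF assms(1-3)] lcos_m_assoc[OF subgroup.subset[OF U] h]
      normalizer_carrier[OF l] by simp
qed

lemma lcos_fibre_lift_involution:
  assumes U: "subgroup U G" and l: "l \<in> normalizer G U" and ll: "l \<otimes> l \<in> U"
    and y: "y \<in> carrier G" and h: "h \<in> carrier G"
  shows "(y <# U) <#> generate G (insert l U) = h <# generate G (insert l U)
     \<longleftrightarrow> y <# U = h <# U \<or> y <# U = (h \<otimes> l) <# U"
proof -
  let ?K = "generate G (insert l U)"
  have K: "subgroup ?K G"
    using generate_is_subgroup subgroup.subset[OF U] normalizer_carrier[OF l] by auto
  have "U \<subseteq> ?K" by (auto intro: generate.incl)
  then have "(y <# U) <#> ?K = y <# ?K" using lcos_set_mult_subgroup[OF U K _ y] by blast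
  then have "(y <# U) <#> ?K = h <# ?K \<longleftrightarrow> y \<in> h <# U \<or> y \<in> (h \<otimes> l) <# U"
    using lcos_eq_iff_mem[OF K y h] lcos_generate_lift_involution[OF assms(1-3) h] by simp
  then show ?thesis
    using lcos_eq_iff_mem[OF U y] h normalizer_carrier[OF l] by simp
qed

lemma lcos_mult_neq:
  assumes U: "subgroup U G" and lG: "l \<in> carrier G" and lU: "l \<notin> U" and h: "h \<in> carrier G"
  shows "(h \<otimes> l) <# U \<noteq> h <# U"
proof
  assume "(h \<otimes> l) <# U = h <# U"
  then have "h \<otimes> l \<in> h <# U" using lcos_self[OF _ U] h lG by (metis m_closed)
  then obtain u where "u \<in> U" "h \<otimes> l = h \<otimes> u" unfolding l_coset_def by blast
  then have "l = u" using l_cancel h lG subgroup.mem_carrier[OF U] by blast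
  then show False using lU \<open>u \<in> U\<close> by simp
qed

lemma lin_push_lift_involution:
  fixes f :: "'a set \<Rightarrow> 'e::field"
  assumes U: "subgroup U G" and l: "l \<in> normalizer G U" and ll: "l \<otimes> l \<in> U" and lU: "l \<notin> U"
    and h: "h \<in> carrier G" and supp: "{C. f C \<noteq> 0} \<subseteq> lcosets U"
  shows "lin_push (\<lambda>C. C <#> generate G (insert l U)) f (h <# generate G (insert l U))
     = f (h <# U) + f ((h \<otimes> l) <# U)"
proof -
  let ?K = "generate G (insert l U)"
  let ?B = "{h <# U, (h \<otimes> l) <# U}"
  have lG: "l \<in> carrier G" using normalizer_carrier[OF l] .
  have fibre: "C <#> ?K = h <# ?K \<longleftrightarrow> C \<in> ?B" if "C \<in> lcosets U" for C
    using that lcos_fibre_lift_involution[OF U l ll _ h] unfolding LCOSETS_def by auto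
  have "?B \<subseteq> lcosets U" using h lG unfolding LCOSETS_def by auto
  then have "{C. f C \<noteq> 0 \<and> C <#> ?K = h <# ?K} = {C \<in> ?B. f C \<noteq> 0}"
    using fibre supp by blast
  then have "lin_push (\<lambda>C. C <#> ?K) f (h <# ?K) = sum f {C \<in> ?B. f C \<noteq> 0}"
    unfolding lin_push_def by simp
  also have "\<dots> = sum f ?B" by (rule sum.mono_neutral_left) auto
  also have "\<dots> = f (h <# U) + f ((h \<otimes> l) <# U)"
    using lcos_mult_neq[OF U lG lU h] by (simp add: add.commute)
  finally show ?thesis .
qed

lemma coset_property_generated_invariant:
  fixes P :: "'a set \<Rightarrow> bool"
  assumes U: "subgroup U G"
    and l: "\<And>j. j \<in> J \<Longrightarrow> l j \<in> normalizer G U"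
    and inv: "\<And>j x. j \<in> J \<Longrightarrow> x \<in> carrier G \<Longrightarrow> P ((x \<otimes> l j) <# U) = P (x <# U)"
    and c: "c \<in> generate (normalizer_quotient G U) ((\<lambda>j. U #> l j) ` J)"
    and x: "x \<in> carrier G"
  shows "P (x <# c) = P (x <# U)"
proof -
  interpret \<pi>: group_hom "G\<lparr>carrier := normalizer G U\<rparr>" "normalizer_quotient G U" "\<lambda>n. U #> n"
    using normalizer_projection_hom[OF U] .
  define T where "T = {n \<in> carrier G. \<forall>x\<in>carrier G. P ((x \<otimes> n) <# U) = P (x <# U)}"
  have T: "subgroup T G" unfolding T_def by (rule right_period_subgroup)
  have lJ: "l ` J \<subseteq> normalizer G U" using l by auto
  have "l ` J \<subseteq> T" using lJ normalizer_carrier inv unfolding T_def by blast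
  then have genT: "generate G (l ` J) \<subseteq> T \<inter> normalizer G U"
    using generate_subgroup_incl[OF _ T] generate_subgroup_incl[OF lJ normalizer_subgroup[OF U]] by auto
  have "generate (normalizer_quotient G U) ((\<lambda>j. U #> l j) ` J)
      = (\<lambda>n. U #> n) ` generate (G\<lparr>carrier := normalizer G U\<rparr>) (l ` J)"
    using \<pi>.generate_img[of "l ` J"] lJ by (simp add: image_image)
  also have "\<dots> = (\<lambda>n. U #> n) ` generate G (l ` J)"
    using generate_consistent[OF lJ normalizer_subgroup[OF U]] by simp
  finally obtain n where "n \<in> T" "n \<in> normalizer G U" "c = U #> n" using c genT by blast
  then show ?thesis using lcos_rcos_normalizer[OF U x] x unfolding T_def by auto
qed

text \<open>A finitely supported function on left \<open>U\<close>-cosets whose zero set is invariant as above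
  vanishes identically when the classes \<open>Ul j\<close> generate an infinite subgroup: otherwise the
  translates of a coset in its support by that subgroup would be infinitely many.\<close>
lemma finite_support_vanishes:
  fixes d :: "'a set \<Rightarrow> 'e::zero"
  assumes U: "subgroup U G"
    and l: "\<And>j. j \<in> J \<Longrightarrow> l j \<in> normalizer G U"
    and inv: "\<And>j x. j \<in> J \<Longrightarrow> x \<in> carrier G \<Longrightarrow> (d ((x \<otimes> l j) <# U) = 0) = (d (x <# U) = 0)"
    and inf: "infinite (generate (normalizer_quotient G U) ((\<lambda>j. U #> l j) ` J))"
    and fin: "finite {C. d C \<noteq> 0}"
    and x: "x \<in> carrier G"
  shows "d (x <# U) = 0"
proof (rule ccontr)
  interpret \<pi>: group_hom "G\<lparr>carrier := normalizer G U\<rparr>" "normalizer_quotient G U" "\<lambda>n. U #> n"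
    using normalizer_projection_hom[OF U] .
  let ?\<Gamma> = "generate (normalizer_quotient G U) ((\<lambda>j. U #> l j) ` J)"
  assume "d (x <# U) \<noteq> 0"
  then have "(\<lambda>c. x <# c) ` ?\<Gamma> \<subseteq> {C. d C \<noteq> 0}"
    using coset_property_generated_invariant[where P = "\<lambda>C. d C = 0" and J = J and l = l,
        OF U l inv _ x]
    by auto
  then have fin_img: "finite ((\<lambda>c. x <# c) ` ?\<Gamma>)" using fin finite_subset by blast
  have "?\<Gamma> \<subseteq> carrier (normalizer_quotient G U)"
    using l carrier_normalizer_quotient by (intro \<pi>.H.generate_incl) auto
  then have "?\<Gamma> \<subseteq> Pow (carrier G)"
    using r_coset_subset_G[OF subgroup.subset[OF U] normalizer_carrier]
    unfolding carrier_normalizer_quotient by blast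
  then have "inj_on (\<lambda>c. x <# c) ?\<Gamma>" using inj_on_subset[OF inj_on_lcos[OF x]] by blast
  then have "finite ?\<Gamma>" using finite_imageD[OF fin_img] by blast
  then show False using inf by contradiction
qed

lemma lin_push_lift_involutions_injective:
  fixes f1 f2 :: "'a set \<Rightarrow> 'e::field"
  assumes U: "subgroup U G"
    and l: "\<And>j. j \<in> J \<Longrightarrow> l j \<in> normalizer G U"
    and ll: "\<And>j. j \<in> J \<Longrightarrow> l j \<otimes> l j \<in> U"
    and lU: "\<And>j. j \<in> J \<Longrightarrow> l j \<notin> U"
    and inf: "infinite (generate (normalizer_quotient G U) ((\<lambda>j. U #> l j) ` J))"
    and f1: "f1 \<in> free_vs (lcosets U)" and f2: "f2 \<in> free_vs (lcosets U)"
    and push: "\<And>j. j \<in> J \<Longrightarrow> lin_push (\<lambda>C. C <#> generate G (insert (l j) U)) f1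
                                = lin_push (\<lambda>C. C <#> generate G (insert (l j) U)) f2"
  shows "f1 = f2"
proof -
  define d where "d C = f1 C - f2 C" for C
  have supp: "{C. f1 C \<noteq> 0} \<subseteq> lcosets U" "{C. f2 C \<noteq> 0} \<subseteq> lcosets U"
    and fin_supp: "finite ({C. f1 C \<noteq> 0} \<union> {C. f2 C \<noteq> 0})"
    using f1 f2 unfolding free_vs_def by auto
  have fin: "finite {C. d C \<noteq> 0}"
    by (rule finite_subset[OF _ fin_supp]) (auto simp: d_def)
  have rel: "(d ((x \<otimes> l j) <# U) = 0) = (d (x <# U) = 0)" if j: "j \<in> J" and x: "x \<in> carrier G" for j x
  proof -
    have "f1 (x <# U) + f1 ((x \<otimes> l j) <# U) = f2 (x <# U) + f2 ((x \<otimes> l j) <# U)"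
      using lin_push_lift_involution[OF U l[OF j] ll[OF j] lU[OF j] x] supp push[OF j] by metis
    then have "d ((x \<otimes> l j) <# U) = - d (x <# U)" unfolding d_def by (simp add: algebra_simps)
    then show ?thesis by simp
  qed
  have vanish: "d (x <# U) = 0" if "x \<in> carrier G" for x
    using finite_support_vanishes[where J = J and l = l, OF U l rel inf fin that] .
  show "f1 = f2"
  proof
    fix C
    show "f1 C = f2 C"
    proof (cases "C \<in> lcosets U")
      case True
      then obtain x where "x \<in> carrier G" "C = x <# U" unfolding LCOSETS_def by blast
      then have "d C = 0" using vanish by blast
      then show ?thesis unfolding d_def by simp
    next
      case False
      then have "f1 C = 0" "f2 C = 0" using supp by blast+
      then show ?thesis by simp
    qed
  qed
qed

end

theorem mainTheorem19:
  fixes H :: "('g, 'b) monoid_scheme"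
    and U :: "'g set"
    and act :: "'g \<Rightarrow> 'e::field \<Rightarrow> 'e"
    and N :: nat
    and g :: "nat \<Rightarrow> 'g set"
    and lift :: "nat \<Rightarrow> 'g"
  defines "Q \<equiv> (H\<lparr>carrier := normalizer H U\<rparr>) Mod U"
  assumes "group H"
    and "subgroup U H"
    and "field_action H act"
    and "\<And>j. j < N \<Longrightarrow> g j \<in> carrier Q"
    and "\<And>j. j < N \<Longrightarrow> group.ord Q (g j) = 2"
    and "infinite (generate Q (g ` {..<N}))"
    and "\<And>j. j < N \<Longrightarrow> lift j \<in> g j"
  shows "inj_on
           (\<lambda>f. \<lambda>j\<in>{..<N}. coset_map H (\<lambda>i. generate H (insert (lift i) U)) f j)
           (free_vs (lcosets\<^bsub>H\<^esub> U) :: ('g set \<Rightarrow> 'e) set)"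
proof (rule inj_onI)
  interpret group H by fact
  have Q: "Q = normalizer_quotient H U" unfolding Q_def normalizer_quotient_def ..
  have lift: "lift j \<in> normalizer H U" "g j = U #>\<^bsub>H\<^esub> lift j"
      "lift j \<otimes>\<^bsub>H\<^esub> lift j \<in> U" "lift j \<notin> U"
    if "j \<in> {..<N}" for j
    using lift_of_involution[OF assms(3) assms(5)[unfolded Q] assms(6)[unfolded Q] assms(8)] that
    by auto
  have "g ` {..<N} = (\<lambda>j. U #>\<^bsub>H\<^esub> lift j) ` {..<N}" using lift(2) by auto
  then have inf: "infinite (generate (normalizer_quotient H U) ((\<lambda>j. U #>\<^bsub>H\<^esub> lift j) ` {..<N}))"
    using assms(7) Q by simp
  fix f1 f2 :: "'g set \<Rightarrow> 'e"
  assume "f1 \<in> free_vs (lcosets\<^bsub>H\<^esub> U)" "f2 \<in> free_vs (lcosets\<^bsub>H\<^esub> U)"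
    and images: "(\<lambda>j\<in>{..<N}. coset_map H (\<lambda>i. generate H (insert (lift i) U)) f1 j)
      = (\<lambda>j\<in>{..<N}. coset_map H (\<lambda>i. generate H (insert (lift i) U)) f2 j)"
  moreover have "lin_push (\<lambda>C. C <#>\<^bsub>H\<^esub> generate H (insert (lift j) U)) f1
      = lin_push (\<lambda>C. C <#>\<^bsub>H\<^esub> generate H (insert (lift j) U)) f2" if "j \<in> {..<N}" for j
    using fun_cong[OF images, of j] that by (simp add: coset_map_def)
  ultimately show "f1 = f2"
    using lin_push_lift_involutions_injective[where J = "{..<N}" and l = lift,
        OF assms(3) lift(1,3,4) inf]
    by blast
qed

end
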